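(* Let $(X,Y)$ be a bivariate random vector whose distribution is given by a joint pmf or a joint pdf (w.r.t. Lebesgue measure) $f$. Call $(X,Y)$ UR$_{\mathrm E}$ (resp. LR$_{\mathrm E}$) if $f(x,y)\ge f(-y,-x)$ whenever $|x|<y$ (resp. whenever $|y|<x$), and UR$^{\mathrm E}$ (resp. LR$^{\mathrm E}$) if $f(x,y)\le f(-y,-x)$ whenever $|x|<y$ (resp. whenever $|y|<x$). Then: (i) UR$_{\mathrm E}$ implies $|X|\le_{\mathrm{st}}|\max(X,Y)|$ and $|\min(X,Y)|\le_{\mathrm{st}}|Y|$; (ii) LR$_{\mathrm E}$ implies $|Y|\le_{\mathrm{st}}|\max(X,Y)|$ and $|\min(X,Y)|\le_{\mathrm{st}}|X|$; (iii) UR$^{\mathrm E}$ implies $|X|\ge_{\mathrm{st}}|\max(X,Y)|$ and $|\min(X,Y)|\ge_{\mathrm{st}}|Y|$; (iv) LR$^{\mathrm E}$ implies $|Y|\ge_{\mathrm{st}}|\max(X,Y)|$ and $|\min(X,Y)|\ge_{\mathrm{st}}|X|$. Under the hypothesis of (i) the stochastic inequalities in (i) are strict if and only if $\Pr[|X|<Y]>\Pr[X<-|Y|]$; under the hypothesis of (iii), those in (iii) are strict iff $\Pr[|X|<Y]<\Pr[X<-|Y|]$. Under the hypothesis of (ii), those in (ii) are strict iff $\Pr[|Y|<X]>\Pr[Y<-|X|]$; under the hypothesis of (iv), those in (iv) are strict iff $\Pr[|Y|<X]<\Pr[Y<-|X|]$.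
   Context: For random variables $U,V$, $U\le_{\mathrm{st}}V$ (equivalently $V\ge_{\mathrm{st}}U$) means $F_U(x)\ge F_V(x)$ for all real $x$, $F$ denoting the cdf; the inequality is strict if in addition $F_U(x)>F_V(x)$ for at least one $x$. *)

theory Defs
  imports "HOL-Probability.Probability"
begin

definition joint_pdf :: "'a measure \<Rightarrow> ('a \<Rightarrow> real) \<Rightarrow> ('a \<Rightarrow> real) \<Rightarrow> (real \<times> real \<Rightarrow> real) \<Rightarrow> bool" where
  "joint_pdf M X Y f \<longleftrightarrow> (\<forall>z. 0 \<le> f z) \<and> f \<in> borel_measurable lborel \<and>
     distributed M lborel (\<lambda>\<omega>. (X \<omega>, Y \<omega>)) (\<lambda>z. ennreal (f z))"

definition joint_pmf :: "'a measure \<Rightarrow> ('a \<Rightarrow> real) \<Rightarrow> ('a \<Rightarrow> real) \<Rightarrow> (real \<times> real \<Rightarrow> real) \<Rightarrow> bool" where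
  "joint_pmf M X Y f \<longleftrightarrow> (\<exists>p. f = pmf p \<and>
     distr M borel (\<lambda>\<omega>. (X \<omega>, Y \<omega>)) = distr (measure_pmf p) borel (\<lambda>z. z))"

definition joint_pdf_or_pmf :: "'a measure \<Rightarrow> ('a \<Rightarrow> real) \<Rightarrow> ('a \<Rightarrow> real) \<Rightarrow> (real \<times> real \<Rightarrow> real) \<Rightarrow> bool" where
  "joint_pdf_or_pmf M X Y f \<longleftrightarrow> joint_pdf M X Y f \<or> joint_pmf M X Y f"

definition st_le :: "'a measure \<Rightarrow> ('a \<Rightarrow> real) \<Rightarrow> ('a \<Rightarrow> real) \<Rightarrow> bool" where
  "st_le M U V \<longleftrightarrow> (\<forall>x. cdf (distr M borel U) x \<ge> cdf (distr M borel V) x)"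

definition st_less :: "'a measure \<Rightarrow> ('a \<Rightarrow> real) \<Rightarrow> ('a \<Rightarrow> real) \<Rightarrow> bool" where
  "st_less M U V \<longleftrightarrow> st_le M U V \<and> (\<exists>x. cdf (distr M borel U) x > cdf (distr M borel V) x)"

definition UR_lower :: "(real \<times> real \<Rightarrow> real) \<Rightarrow> bool" where
  "UR_lower f \<longleftrightarrow> (\<forall>x y. \<bar>x\<bar> < y \<longrightarrow> f (x, y) \<ge> f (-y, -x))"

definition LR_lower :: "(real \<times> real \<Rightarrow> real) \<Rightarrow> bool" where
  "LR_lower f \<longleftrightarrow> (\<forall>x y. \<bar>y\<bar> < x \<longrightarrow> f (x, y) \<ge> f (-y, -x))"

definition UR_upper :: "(real \<times> real \<Rightarrow> real) \<Rightarrow> bool" where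
  "UR_upper f \<longleftrightarrow> (\<forall>x y. \<bar>x\<bar> < y \<longrightarrow> f (x, y) \<le> f (-y, -x))"

definition LR_upper :: "(real \<times> real \<Rightarrow> real) \<Rightarrow> bool" where
  "LR_upper f \<longleftrightarrow> (\<forall>x y. \<bar>y\<bar> < x \<longrightarrow> f (x, y) \<le> f (-y, -x))"

end

theory Submission
  imports Defs
begin

text \<open>Let \<open>\<sigma>(x, y) = (-y, -x)\<close> be the reflection in the antidiagonal and \<open>D = {|x| < y}\<close>.
  Since \<open>\<sigma>\<close> preserves Lebesgue and counting measure, the condition \<open>f \<circ> \<sigma> \<le> f\<close> on \<open>D\<close> says
  that the law \<open>\<mu>\<close> of \<open>(X, Y)\<close> satisfies \<open>\<mu>(\<sigma>\<^sup>-\<^sup>1 S) \<le> \<mu>(S)\<close> for all Borel \<open>S \<subseteq> D\<close>.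
  For every \<open>t\<close>, the events \<open>|X| \<le> t\<close> and \<open>|max(X, Y)| \<le> t\<close> differ exactly by the strip
  \<open>A\<^sub>t = {|x| \<le> t < y}\<close> and its mirror image \<open>\<sigma>\<^sup>-\<^sup>1 A\<^sub>t\<close>, and so do \<open>|min(X, Y)| \<le> t\<close> and
  \<open>|Y| \<le> t\<close>; hence both cdf gaps equal \<open>\<mu>(A\<^sub>t) - \<mu>(\<sigma>\<^sup>-\<^sup>1 A\<^sub>t) \<ge> 0\<close>. Some gap is positive iff
  \<open>\<mu>(D) > \<mu>(\<sigma>\<^sup>-\<^sup>1 D)\<close>: \<open>D\<close> is the union of the \<open>A\<^sub>t\<close> over rational \<open>t\<close>, and the Borel
  sets \<open>S \<subseteq> D\<close> with \<open>\<mu>(\<sigma>\<^sup>-\<^sup>1 S) = \<mu>(S)\<close> are closed under Borel subsets and countable unions.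
  Parts (ii)--(iv) are part (i) for \<open>(Y, X)\<close>, \<open>(-Y, -X)\<close> and \<open>(-X, -Y)\<close>, whose laws are
  images of the law of \<open>(X, Y)\<close> under maps commuting with \<open>\<sigma>\<close>.\<close>

lemma abs_max_uminus: "\<bar>max (- a) (- b)\<bar> = \<bar>min a b :: 'a :: linordered_idom\<bar>"
  by (simp add: max_def min_def)

lemma abs_min_uminus: "\<bar>min (- a) (- b)\<bar> = \<bar>max a b :: 'a :: linordered_idom\<bar>"
  by (simp add: max_def min_def)

lemma abs_less_uminus_iff: "\<bar>y\<bar> < - x \<longleftrightarrow> x < - \<bar>y :: 'a :: linordered_idom\<bar>"
  by (simp add: less_minus_iff)

definition reflect_antidiag :: "real \<times> real \<Rightarrow> real \<times> real" where
  "reflect_antidiag z = (- snd z, - fst z)"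

lemma reflect_antidiag_Pair [simp]: "reflect_antidiag (x, y) = (- y, - x)"
  by (simp add: reflect_antidiag_def)

lemma reflect_antidiag_reflect_antidiag [simp]: "reflect_antidiag (reflect_antidiag z) = z"
  by (simp add: reflect_antidiag_def)

lemma measurable_reflect_antidiag [measurable]: "reflect_antidiag \<in> borel_measurable borel"
  unfolding reflect_antidiag_def by (intro borel_measurable_continuous_onI continuous_intros)

lemma vimage_reflect_antidiag_borel: "S \<in> sets borel \<Longrightarrow> reflect_antidiag -` S \<in> sets borel"
  using measurable_sets[OF measurable_reflect_antidiag] by simp

lemma distr_lborel_uminus_prod: "distr lborel borel (uminus :: real \<times> real \<Rightarrow> _) = lborel"
proof -
  have "(lborel :: (real \<times> real) measure) =
      density (distr lborel borel (\<lambda>x. 0 + (-1::real) *\<^sub>R x)) (\<lambda>_. \<bar>-1::real\<bar> ^ DIM(real \<times> real))"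
    by (rule lborel_affine) simp
  then show ?thesis by (simp add: density_1)
qed

lemma distr_lborel_swap_prod: "distr lborel borel (prod.swap :: real \<times> real \<Rightarrow> _) = lborel"
proof -
  have "distr lborel borel (prod.swap :: real \<times> real \<Rightarrow> _) =
      distr (lborel \<Otimes>\<^sub>M lborel) (lborel \<Otimes>\<^sub>M lborel) (\<lambda>(x, y). (y, x))"
    by (simp add: lborel_prod prod.swap_def case_prod_beta)
      (rule distr_cong; simp add: borel_prod split: prod.split)
  also have "\<dots> = lborel \<Otimes>\<^sub>M lborel"
    by (rule lborel_pair.distr_pair_swap[symmetric])
  finally show ?thesis by (simp add: lborel_prod)
qed

lemma distr_lborel_reflect_antidiag: "distr lborel borel reflect_antidiag = lborel"
proof -
  have "reflect_antidiag = uminus \<circ> prod.swap"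
    by (auto simp: reflect_antidiag_def fun_eq_iff)
  then have "distr lborel borel reflect_antidiag = distr (distr lborel borel prod.swap) borel uminus"
    by (subst distr_distr) (auto intro!: borel_measurable_continuous_onI continuous_intros)
  then show ?thesis by (simp add: distr_lborel_swap_prod distr_lborel_uminus_prod)
qed

lemma emeasure_density_vimage_le:
  assumes g: "g \<in> measurable N N" "distr N N g = N" "\<And>z. z \<in> space N \<Longrightarrow> g (g z) = z"
    and f: "f \<in> borel_measurable N"
    and S: "S \<in> sets N" "\<And>z. z \<in> S \<Longrightarrow> f (g z) \<le> f z"
  shows "emeasure (density N f) (g -` S \<inter> space N) \<le> emeasure (density N f) S"
proof -
  have gS: "g -` S \<inter> space N \<in> sets N"
    using g(1) S(1) by measurable
  have "emeasure (density N f) (g -` S \<inter> space N) = (\<integral>\<^sup>+z. f (g (g z)) * indicator S (g z) \<partial>N)"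
    using f gS g(3) by (auto simp: emeasure_density intro!: nn_integral_cong split: split_indicator)
  also have "\<dots> = (\<integral>\<^sup>+z. f (g z) * indicator S z \<partial>distr N N g)"
    using g(1) f S(1) by (subst nn_integral_distr) auto
  also have "\<dots> \<le> (\<integral>\<^sup>+z. f z * indicator S z \<partial>N)"
    unfolding g(2) using S(2) by (intro nn_integral_mono) (auto split: split_indicator)
  also have "\<dots> = emeasure (density N f) S"
    using f S(1) by (simp add: emeasure_density nn_integral_set_ennreal)
  finally show ?thesis .
qed

lemma joint_pdf_or_pmf_law:
  assumes "X \<in> borel_measurable M" "Y \<in> borel_measurable M" "joint_pdf_or_pmf M X Y f"
  obtains N where "space N = UNIV" "sets borel \<subseteq> sets N"
    "reflect_antidiag \<in> measurable N N" "distr N N reflect_antidiag = N"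
    "(\<lambda>z. ennreal (f z)) \<in> borel_measurable N"
    "\<And>B. B \<in> sets borel \<Longrightarrow>
      emeasure M {\<omega>\<in>space M. (X \<omega>, Y \<omega>) \<in> B} = emeasure (density N (\<lambda>z. ennreal (f z))) B"
proof -
  have XY: "(\<lambda>\<omega>. (X \<omega>, Y \<omega>)) \<in> borel_measurable M"
    using assms(1,2) by measurable
  have law: "emeasure M {\<omega>\<in>space M. (X \<omega>, Y \<omega>) \<in> B} = emeasure (distr M borel (\<lambda>\<omega>. (X \<omega>, Y \<omega>))) B"
    if "B \<in> sets borel" for B
    using XY that by (simp add: emeasure_distr vimage_def Int_def conj_commute)
  consider "joint_pdf M X Y f" | "joint_pmf M X Y f"
    using assms(3) unfolding joint_pdf_or_pmf_def by blast
  then show ?thesis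
  proof cases
    case 1
    then have "f \<in> borel_measurable lborel"
      and "distr M lborel (\<lambda>\<omega>. (X \<omega>, Y \<omega>)) = density lborel (\<lambda>z. ennreal (f z))"
      unfolding joint_pdf_def by (auto dest: distributed_distr_eq_density)
    moreover have "distr M lborel (\<lambda>\<omega>. (X \<omega>, Y \<omega>)) = distr M borel (\<lambda>\<omega>. (X \<omega>, Y \<omega>))"
      by (rule distr_cong) simp_all
    moreover have "distr lborel lborel reflect_antidiag = lborel"
      using distr_lborel_reflect_antidiag by (metis distr_cong sets_lborel)
    ultimately show ?thesis
      by (intro that[of lborel]) (auto simp: law)
  next
    case 2
    then obtain p where "f = pmf p"
      and "distr M borel (\<lambda>\<omega>. (X \<omega>, Y \<omega>)) = distr (measure_pmf p) borel (\<lambda>z. z)"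
      unfolding joint_pmf_def by blast
    moreover have "bij reflect_antidiag"
      by (rule bij_betwI[of _ _ _ reflect_antidiag]) auto
    ultimately show ?thesis
      by (intro that[of "count_space UNIV"])
        (auto simp: law emeasure_distr measure_pmf_eq_density distr_bij_count_space)
  qed
qed

lemma joint_pdf_or_pmf_reflect_antidiag_le:
  assumes "prob_space M" "X \<in> borel_measurable M" "Y \<in> borel_measurable M"
    and "joint_pdf_or_pmf M X Y f"
    and "S \<in> sets borel" "\<And>z. z \<in> S \<Longrightarrow> f (reflect_antidiag z) \<le> f z"
  shows "measure M {\<omega>\<in>space M. reflect_antidiag (X \<omega>, Y \<omega>) \<in> S} \<le>
    measure M {\<omega>\<in>space M. (X \<omega>, Y \<omega>) \<in> S}"
proof -
  interpret prob_space M by fact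
  obtain N where N: "space N = UNIV" "sets borel \<subseteq> sets N"
    "reflect_antidiag \<in> measurable N N" "distr N N reflect_antidiag = N"
    "(\<lambda>z. ennreal (f z)) \<in> borel_measurable N"
    and law: "\<And>B. B \<in> sets borel \<Longrightarrow>
      emeasure M {\<omega>\<in>space M. (X \<omega>, Y \<omega>) \<in> B} = emeasure (density N (\<lambda>z. ennreal (f z))) B"
    using joint_pdf_or_pmf_law[OF assms(2-4)] by blast
  have rS: "reflect_antidiag -` S \<in> sets borel"
    using assms(5) by (rule vimage_reflect_antidiag_borel)
  have "emeasure M {\<omega>\<in>space M. reflect_antidiag (X \<omega>, Y \<omega>) \<in> S} =
      emeasure (density N (\<lambda>z. ennreal (f z))) (reflect_antidiag -` S \<inter> space N)"
    using law[OF rS] N(1) by simp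
  also have "\<dots> \<le> emeasure (density N (\<lambda>z. ennreal (f z))) S"
    using N assms(5,6) by (intro emeasure_density_vimage_le) (auto intro: ennreal_leI)
  also have "\<dots> = emeasure M {\<omega>\<in>space M. (X \<omega>, Y \<omega>) \<in> S}"
    using law[OF assms(5)] by simp
  finally show ?thesis
    by (simp add: emeasure_eq_measure)
qed

definition upper_cone :: "(real \<times> real) set" where
  "upper_cone = {z. \<bar>fst z\<bar> < snd z}"

definition cone_strip :: "real \<Rightarrow> (real \<times> real) set" where
  "cone_strip t = {z. \<bar>fst z\<bar> \<le> t \<and> t < snd z}"

lemma upper_cone_borel [measurable]: "upper_cone \<in> sets borel"
  unfolding upper_cone_def by (intro borel_open open_Collect_less continuous_intros)

lemma cone_strip_borel [measurable]: "cone_strip t \<in> sets borel"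
proof -
  have "cone_strip t = {z. \<bar>fst z\<bar> \<le> t} \<inter> {z. t < snd z}"
    by (auto simp: cone_strip_def)
  then show ?thesis
    by (simp only:)
      (intro sets.Int borel_closed borel_open closed_Collect_le open_Collect_less continuous_intros)
qed

lemma cone_strip_subset_upper_cone: "cone_strip t \<subseteq> upper_cone"
  by (auto simp: cone_strip_def upper_cone_def)

lemma upper_cone_eq_Union_cone_strip: "upper_cone = (\<Union>n. cone_strip (of_rat (from_nat n)))"
proof
  show "upper_cone \<subseteq> (\<Union>n. cone_strip (of_rat (from_nat n)))"
  proof
    fix z assume "z \<in> upper_cone"
    then obtain q where "\<bar>fst z\<bar> < of_rat q" "of_rat q < snd z"
      unfolding upper_cone_def using of_rat_dense by blast
    moreover obtain n where "q = from_nat n"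
      using surj_from_nat by (metis surjD)
    ultimately have "z \<in> cone_strip (of_rat (from_nat n))"
      by (simp add: cone_strip_def)
    then show "z \<in> (\<Union>n. cone_strip (of_rat (from_nat n)))"
      by (rule UN_I[OF UNIV_I])
  qed
  show "(\<Union>n. cone_strip (of_rat (from_nat n))) \<subseteq> upper_cone"
    by (intro UN_least cone_strip_subset_upper_cone)
qed

lemma all_reflect_antidiag: "(\<forall>z. P (reflect_antidiag z)) \<longleftrightarrow> (\<forall>z. P z)"
  by (metis reflect_antidiag_reflect_antidiag)

lemma swap_reflect_antidiag: "prod.swap (reflect_antidiag z) = reflect_antidiag (prod.swap z)"
  by (cases z) simp

lemma uminus_reflect_antidiag: "- reflect_antidiag z = reflect_antidiag (- z)"
  by (cases z) simp

lemma UR_lower_iff_upper_cone: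
  "UR_lower f \<longleftrightarrow> (\<forall>z. z \<in> upper_cone \<longrightarrow> f (reflect_antidiag z) \<le> f z)"
  by (auto simp: UR_lower_def upper_cone_def)

lemma LR_lower_iff_upper_cone:
  "LR_lower f \<longleftrightarrow> (\<forall>z. prod.swap z \<in> upper_cone \<longrightarrow> f (reflect_antidiag z) \<le> f z)"
  by (auto simp: LR_lower_def upper_cone_def)

lemma UR_upper_iff_upper_cone:
  "UR_upper f \<longleftrightarrow> (\<forall>z. reflect_antidiag z \<in> upper_cone \<longrightarrow> f (reflect_antidiag z) \<le> f z)"
proof -
  have "UR_upper f \<longleftrightarrow> (\<forall>z. z \<in> upper_cone \<longrightarrow> f z \<le> f (reflect_antidiag z))"
    by (auto simp: UR_upper_def upper_cone_def)
  then show ?thesis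
    using all_reflect_antidiag[of "\<lambda>z. z \<in> upper_cone \<longrightarrow> f z \<le> f (reflect_antidiag z)"] by simp
qed

lemma LR_upper_iff_upper_cone:
  "LR_upper f \<longleftrightarrow> (\<forall>z. - z \<in> upper_cone \<longrightarrow> f (reflect_antidiag z) \<le> f z)"
proof -
  have "LR_upper f \<longleftrightarrow> (\<forall>z. prod.swap z \<in> upper_cone \<longrightarrow> f z \<le> f (reflect_antidiag z))"
    by (auto simp: LR_upper_def upper_cone_def)
  then show ?thesis
    using all_reflect_antidiag[of "\<lambda>z. prod.swap z \<in> upper_cone \<longrightarrow> f z \<le> f (reflect_antidiag z)"]
    by (simp add: swap_reflect_antidiag)
qed

definition reflection_dominated :: "(real \<times> real) measure \<Rightarrow> bool" where
  "reflection_dominated \<mu> \<longleftrightarrow>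
    (\<forall>S \<in> sets borel. S \<subseteq> upper_cone \<longrightarrow> measure \<mu> (reflect_antidiag -` S) \<le> measure \<mu> S)"

lemma joint_pdf_or_pmf_reflection_dominated:
  assumes "prob_space M" "X \<in> borel_measurable M" "Y \<in> borel_measurable M"
    and "joint_pdf_or_pmf M X Y f"
    and \<phi>: "\<phi> \<in> borel_measurable borel" "\<And>z. \<phi> (reflect_antidiag z) = reflect_antidiag (\<phi> z)"
    and dom: "\<And>z. \<phi> z \<in> upper_cone \<Longrightarrow> f (reflect_antidiag z) \<le> f z"
  shows "reflection_dominated (distr M borel (\<lambda>\<omega>. \<phi> (X \<omega>, Y \<omega>)))"
  unfolding reflection_dominated_def
proof (intro ballI impI)
  fix S :: "(real \<times> real) set"
  assume S: "S \<in> sets borel" "S \<subseteq> upper_cone"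
  have Z: "(\<lambda>\<omega>. \<phi> (X \<omega>, Y \<omega>)) \<in> borel_measurable M"
    using assms(2,3) \<phi>(1) by measurable
  have law: "measure (distr M borel (\<lambda>\<omega>. \<phi> (X \<omega>, Y \<omega>))) B =
      measure M {\<omega>\<in>space M. (X \<omega>, Y \<omega>) \<in> \<phi> -` B}" if "B \<in> sets borel" for B
    using Z that by (simp add: measure_distr vimage_def Int_def conj_commute)
  have "measure M {\<omega>\<in>space M. reflect_antidiag (X \<omega>, Y \<omega>) \<in> \<phi> -` S} \<le>
      measure M {\<omega>\<in>space M. (X \<omega>, Y \<omega>) \<in> \<phi> -` S}"
    using measurable_sets[OF \<phi>(1) S(1)] S(2) dom
    by (intro joint_pdf_or_pmf_reflect_antidiag_le[OF assms(1-4)]) auto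
  then show "measure (distr M borel (\<lambda>\<omega>. \<phi> (X \<omega>, Y \<omega>))) (reflect_antidiag -` S) \<le>
      measure (distr M borel (\<lambda>\<omega>. \<phi> (X \<omega>, Y \<omega>))) S"
    using S(1) vimage_reflect_antidiag_borel[OF S(1)]
    by (simp add: law \<phi>(2) del: reflect_antidiag_Pair)
qed

context
  fixes \<mu> :: "(real \<times> real) measure"
  assumes finite: "finite_measure \<mu>" and sets_\<mu>: "sets \<mu> = sets borel"
begin

interpretation finite_measure \<mu> by (rule finite)

lemma measure_reflect_antidiag_Diff:
  assumes "S \<in> sets borel" "T \<in> sets borel" "T \<subseteq> S"
  shows "measure \<mu> (S - T) - measure \<mu> (reflect_antidiag -` (S - T)) =
    (measure \<mu> S - measure \<mu> (reflect_antidiag -` S)) - (measure \<mu> T - measure \<mu> (reflect_antidiag -` T))"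
  using assms vimage_reflect_antidiag_borel[of S] vimage_reflect_antidiag_borel[of T]
  by (simp add: finite_measure_Diff sets_\<mu> vimage_Diff vimage_mono)

lemma measure_abs_fst_le_minus_abs_max_le:
  "measure \<mu> {z. \<bar>fst z\<bar> \<le> t} - measure \<mu> {z. \<bar>max (fst z) (snd z)\<bar> \<le> t} =
    measure \<mu> (cone_strip t) - measure \<mu> (reflect_antidiag -` cone_strip t)"
proof -
  define C where "C = {z::real \<times> real. \<bar>fst z\<bar> \<le> t} \<inter> {z. snd z \<le> t}"
  have C: "C \<in> sets \<mu>"
    unfolding C_def sets_\<mu> by (intro sets.Int borel_closed closed_Collect_le continuous_intros)
  have "{z. \<bar>fst z\<bar> \<le> t} = C \<union> cone_strip t" "C \<inter> cone_strip t = {}"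
    "{z. \<bar>max (fst z) (snd z)\<bar> \<le> t} = C \<union> reflect_antidiag -` cone_strip t"
    "C \<inter> reflect_antidiag -` cone_strip t = {}"
    by (auto simp: C_def cone_strip_def reflect_antidiag_def)
  then show ?thesis
    using C finite_measure_Union[of C "cone_strip t"]
      finite_measure_Union[of C "reflect_antidiag -` cone_strip t"]
    by (simp add: sets_\<mu> vimage_reflect_antidiag_borel)
qed

lemma measure_abs_min_le_minus_abs_snd_le:
  "measure \<mu> {z. \<bar>min (fst z) (snd z)\<bar> \<le> t} - measure \<mu> {z. \<bar>snd z\<bar> \<le> t} =
    measure \<mu> (cone_strip t) - measure \<mu> (reflect_antidiag -` cone_strip t)"
proof -
  define E where "E = {z::real \<times> real. \<bar>snd z\<bar> \<le> t} \<inter> {z. - t \<le> fst z}"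
  have E: "E \<in> sets \<mu>"
    unfolding E_def sets_\<mu> by (intro sets.Int borel_closed closed_Collect_le continuous_intros)
  have "{z. \<bar>min (fst z) (snd z)\<bar> \<le> t} = E \<union> cone_strip t" "E \<inter> cone_strip t = {}"
    "{z. \<bar>snd z\<bar> \<le> t} = E \<union> reflect_antidiag -` cone_strip t"
    "E \<inter> reflect_antidiag -` cone_strip t = {}"
    by (auto simp: E_def cone_strip_def reflect_antidiag_def)
  then show ?thesis
    using E finite_measure_Union[of E "cone_strip t"]
      finite_measure_Union[of E "reflect_antidiag -` cone_strip t"]
    by (simp add: sets_\<mu> vimage_reflect_antidiag_borel)
qed

context
  assumes dominated: "reflection_dominated \<mu>"
begin

lemma reflection_deficit_mono:
  assumes "S \<in> sets borel" "T \<in> sets borel" "T \<subseteq> S" "S \<subseteq> upper_cone"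
  shows "measure \<mu> T - measure \<mu> (reflect_antidiag -` T) \<le> measure \<mu> S - measure \<mu> (reflect_antidiag -` S)"
  using measure_reflect_antidiag_Diff[OF assms(1-3)] dominated assms
  unfolding reflection_dominated_def by (metis Diff_subset diff_ge_0_iff_ge order_trans sets.Diff)

lemma reflection_balanced_subset:
  assumes "measure \<mu> (reflect_antidiag -` S) = measure \<mu> S"
    and "S \<in> sets borel" "T \<in> sets borel" "T \<subseteq> S" "S \<subseteq> upper_cone"
  shows "measure \<mu> (reflect_antidiag -` T) = measure \<mu> T"
  using reflection_deficit_mono[OF assms(2-5)] assms dominated
  unfolding reflection_dominated_def by force

lemma reflection_balanced_Union:
  fixes A :: "nat \<Rightarrow> (real \<times> real) set"
  assumes "\<And>n. A n \<in> sets borel" "\<And>n. A n \<subseteq> upper_cone"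
    and "\<And>n. measure \<mu> (reflect_antidiag -` A n) = measure \<mu> (A n)"
  shows "measure \<mu> (reflect_antidiag -` (\<Union>n. A n)) = measure \<mu> (\<Union>n. A n)"
proof -
  define B where "B = disjointed A"
  have B_borel: "B n \<in> sets borel" for n
    using sets.range_disjointed_sets[of A borel] assms(1) unfolding B_def by blast
  have B_balanced: "measure \<mu> (reflect_antidiag -` B n) = measure \<mu> (B n)" for n
    by (rule reflection_balanced_subset[OF assms(3)[of n] assms(1)[of n] B_borel _ assms(2)[of n]])
      (simp add: B_def disjointed_subset)
  have "(\<lambda>n. measure \<mu> (B n)) sums measure \<mu> (\<Union>n. B n)"
    using B_borel by (intro finite_measure_UNION) (auto simp: sets_\<mu> B_def disjoint_family_disjointed)
  moreover have "disjoint_family (\<lambda>n. reflect_antidiag -` B n)"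
    using disjoint_family_disjointed[of A] unfolding B_def disjoint_family_on_def by blast
  then have "(\<lambda>n. measure \<mu> (reflect_antidiag -` B n)) sums measure \<mu> (\<Union>n. reflect_antidiag -` B n)"
    using B_borel by (intro finite_measure_UNION) (auto simp: sets_\<mu> vimage_reflect_antidiag_borel)
  ultimately have "measure \<mu> (\<Union>n. reflect_antidiag -` B n) = measure \<mu> (\<Union>n. B n)"
    unfolding B_balanced by (rule sums_unique2[symmetric])
  moreover have "(\<Union>n. B n) = (\<Union>n. A n)"
    unfolding B_def by (rule UN_disjointed_eq)
  ultimately show ?thesis
    by (simp flip: vimage_UN)
qed

lemma reflection_dominated_strict_iff:
  "(\<exists>t. measure \<mu> (reflect_antidiag -` cone_strip t) < measure \<mu> (cone_strip t)) \<longleftrightarrow>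
    measure \<mu> (reflect_antidiag -` upper_cone) < measure \<mu> upper_cone"
proof
  assume "\<exists>t. measure \<mu> (reflect_antidiag -` cone_strip t) < measure \<mu> (cone_strip t)"
  then obtain t where "measure \<mu> (reflect_antidiag -` cone_strip t) < measure \<mu> (cone_strip t)" ..
  then show "measure \<mu> (reflect_antidiag -` upper_cone) < measure \<mu> upper_cone"
    using reflection_deficit_mono[OF upper_cone_borel cone_strip_borel cone_strip_subset_upper_cone order_refl,
        of t]
    by linarith
next
  assume strict: "measure \<mu> (reflect_antidiag -` upper_cone) < measure \<mu> upper_cone"
  show "\<exists>t. measure \<mu> (reflect_antidiag -` cone_strip t) < measure \<mu> (cone_strip t)"
  proof (rule ccontr)
    assume "\<not> ?thesis"
    then have "measure \<mu> (reflect_antidiag -` cone_strip t) = measure \<mu> (cone_strip t)" for t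
      using dominated cone_strip_borel cone_strip_subset_upper_cone
      unfolding reflection_dominated_def by (meson antisym not_le)
    then have "measure \<mu> (reflect_antidiag -` upper_cone) = measure \<mu> upper_cone"
      unfolding upper_cone_eq_Union_cone_strip
      by (intro reflection_balanced_Union cone_strip_borel cone_strip_subset_upper_cone)
    with strict show False by simp
  qed
qed

end

end

lemma cdf_distr_comp:
  assumes "Z \<in> borel_measurable M" "g \<in> borel_measurable borel"
  shows "cdf (distr M borel (\<lambda>\<omega>. g (Z \<omega>))) t = measure (distr M borel Z) {z. g z \<le> t}"
proof -
  have "distr M borel (\<lambda>\<omega>. g (Z \<omega>)) = distr (distr M borel Z) borel g"
    using assms by (simp add: distr_distr comp_def)
  then show ?thesis
    using assms(2) by (simp add: cdf_def measure_distr vimage_def)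
qed

lemma st_order_abs_max_min_if_reflection_dominated:
  assumes "prob_space M" and U: "U \<in> borel_measurable M" and V: "V \<in> borel_measurable M"
    and dominated: "reflection_dominated (distr M borel (\<lambda>\<omega>. (U \<omega>, V \<omega>)))"
  shows "st_le M (\<lambda>\<omega>. \<bar>U \<omega>\<bar>) (\<lambda>\<omega>. \<bar>max (U \<omega>) (V \<omega>)\<bar>) \<and>
    st_le M (\<lambda>\<omega>. \<bar>min (U \<omega>) (V \<omega>)\<bar>) (\<lambda>\<omega>. \<bar>V \<omega>\<bar>) \<and>
    ((st_less M (\<lambda>\<omega>. \<bar>U \<omega>\<bar>) (\<lambda>\<omega>. \<bar>max (U \<omega>) (V \<omega>)\<bar>) \<and>
      st_less M (\<lambda>\<omega>. \<bar>min (U \<omega>) (V \<omega>)\<bar>) (\<lambda>\<omega>. \<bar>V \<omega>\<bar>)) \<longleftrightarrow>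
     measure M {\<omega>\<in>space M. \<bar>U \<omega>\<bar> < V \<omega>} > measure M {\<omega>\<in>space M. U \<omega> < - \<bar>V \<omega>\<bar>})"
proof -
  interpret prob_space M by fact
  define \<mu> where "\<mu> = distr M borel (\<lambda>\<omega>. (U \<omega>, V \<omega>))"
  have Z: "(\<lambda>\<omega>. (U \<omega>, V \<omega>)) \<in> borel_measurable M"
    using U V by measurable
  have finite: "finite_measure \<mu>" and sets: "sets \<mu> = sets borel"
    unfolding \<mu>_def using Z by (auto intro: finite_measure_distr)
  have law: "measure M {\<omega>\<in>space M. (U \<omega>, V \<omega>) \<in> B} = measure \<mu> B" if "B \<in> sets borel" for B
    unfolding \<mu>_def using Z that by (simp add: measure_distr vimage_def Int_def conj_commute)
  have cdf: "cdf (distr M borel (\<lambda>\<omega>. g (U \<omega>, V \<omega>))) t = measure \<mu> {z. g z \<le> t}"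
    if "g \<in> borel_measurable borel" for g :: "real \<times> real \<Rightarrow> real" and t
    unfolding \<mu>_def using Z that by (rule cdf_distr_comp)
  have borel: "(\<lambda>z::real \<times> real. \<bar>fst z\<bar>) \<in> borel_measurable borel"
    "(\<lambda>z::real \<times> real. \<bar>snd z\<bar>) \<in> borel_measurable borel"
    "(\<lambda>z::real \<times> real. \<bar>max (fst z) (snd z)\<bar>) \<in> borel_measurable borel"
    "(\<lambda>z::real \<times> real. \<bar>min (fst z) (snd z)\<bar>) \<in> borel_measurable borel"
    by (intro borel_measurable_continuous_onI continuous_intros)+
  have cdf_U: "cdf (distr M borel (\<lambda>\<omega>. \<bar>U \<omega>\<bar>)) t = measure \<mu> {z. \<bar>fst z\<bar> \<le> t}" for t
    using cdf[OF borel(1), of t] by simp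
  have cdf_V: "cdf (distr M borel (\<lambda>\<omega>. \<bar>V \<omega>\<bar>)) t = measure \<mu> {z. \<bar>snd z\<bar> \<le> t}" for t
    using cdf[OF borel(2), of t] by simp
  have cdf_max: "cdf (distr M borel (\<lambda>\<omega>. \<bar>max (U \<omega>) (V \<omega>)\<bar>)) t =
      measure \<mu> {z. \<bar>max (fst z) (snd z)\<bar> \<le> t}" for t
    using cdf[OF borel(3), of t] by simp
  have cdf_min: "cdf (distr M borel (\<lambda>\<omega>. \<bar>min (U \<omega>) (V \<omega>)\<bar>)) t =
      measure \<mu> {z. \<bar>min (fst z) (snd z)\<bar> \<le> t}" for t
    using cdf[OF borel(4), of t] by simp
  have upper: "measure M {\<omega>\<in>space M. \<bar>U \<omega>\<bar> < V \<omega>} = measure \<mu> upper_cone"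
    using law[OF upper_cone_borel] by (simp add: upper_cone_def)
  have "{\<omega>\<in>space M. U \<omega> < - \<bar>V \<omega>\<bar>} = {\<omega>\<in>space M. (U \<omega>, V \<omega>) \<in> reflect_antidiag -` upper_cone}"
    by (auto simp: upper_cone_def)
  then have lower: "measure M {\<omega>\<in>space M. U \<omega> < - \<bar>V \<omega>\<bar>} = measure \<mu> (reflect_antidiag -` upper_cone)"
    using law[OF vimage_reflect_antidiag_borel[OF upper_cone_borel]] by simp
  have "measure \<mu> (reflect_antidiag -` cone_strip t) \<le> measure \<mu> (cone_strip t)" for t
    using dominated cone_strip_subset_upper_cone unfolding \<mu>_def reflection_dominated_def by simp
  then show ?thesis
    unfolding st_le_def st_less_def cdf_U cdf_V cdf_max cdf_min upper lower
      reflection_dominated_strict_iff[OF finite sets dominated[folded \<mu>_def], symmetric]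
    using measure_abs_fst_le_minus_abs_max_le[OF finite sets]
      measure_abs_min_le_minus_abs_snd_le[OF finite sets]
    by (smt (verit))
qed

theorem proposition4p3:
  fixes M :: "'a measure" and X Y :: "'a \<Rightarrow> real" and f :: "real \<times> real \<Rightarrow> real"
  assumes "prob_space M"
    and "X \<in> borel_measurable M" and "Y \<in> borel_measurable M"
    and "joint_pdf_or_pmf M X Y f"
  shows
   "(UR_lower f \<longrightarrow>
       st_le M (\<lambda>\<omega>. \<bar>X \<omega>\<bar>) (\<lambda>\<omega>. \<bar>max (X \<omega>) (Y \<omega>)\<bar>) \<and>
       st_le M (\<lambda>\<omega>. \<bar>min (X \<omega>) (Y \<omega>)\<bar>) (\<lambda>\<omega>. \<bar>Y \<omega>\<bar>) \<and>
       ((st_less M (\<lambda>\<omega>. \<bar>X \<omega>\<bar>) (\<lambda>\<omega>. \<bar>max (X \<omega>) (Y \<omega>)\<bar>) \<and>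
         st_less M (\<lambda>\<omega>. \<bar>min (X \<omega>) (Y \<omega>)\<bar>) (\<lambda>\<omega>. \<bar>Y \<omega>\<bar>)) \<longleftrightarrow>
        measure M {\<omega>\<in>space M. \<bar>X \<omega>\<bar> < Y \<omega>} > measure M {\<omega>\<in>space M. X \<omega> < - \<bar>Y \<omega>\<bar>}))
  \<and> (LR_lower f \<longrightarrow>
       st_le M (\<lambda>\<omega>. \<bar>Y \<omega>\<bar>) (\<lambda>\<omega>. \<bar>max (X \<omega>) (Y \<omega>)\<bar>) \<and>
       st_le M (\<lambda>\<omega>. \<bar>min (X \<omega>) (Y \<omega>)\<bar>) (\<lambda>\<omega>. \<bar>X \<omega>\<bar>) \<and>
       ((st_less M (\<lambda>\<omega>. \<bar>Y \<omega>\<bar>) (\<lambda>\<omega>. \<bar>max (X \<omega>) (Y \<omega>)\<bar>) \<and>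
         st_less M (\<lambda>\<omega>. \<bar>min (X \<omega>) (Y \<omega>)\<bar>) (\<lambda>\<omega>. \<bar>X \<omega>\<bar>)) \<longleftrightarrow>
        measure M {\<omega>\<in>space M. \<bar>Y \<omega>\<bar> < X \<omega>} > measure M {\<omega>\<in>space M. Y \<omega> < - \<bar>X \<omega>\<bar>}))
  \<and> (UR_upper f \<longrightarrow>
       st_le M (\<lambda>\<omega>. \<bar>max (X \<omega>) (Y \<omega>)\<bar>) (\<lambda>\<omega>. \<bar>X \<omega>\<bar>) \<and>
       st_le M (\<lambda>\<omega>. \<bar>Y \<omega>\<bar>) (\<lambda>\<omega>. \<bar>min (X \<omega>) (Y \<omega>)\<bar>) \<and>
       ((st_less M (\<lambda>\<omega>. \<bar>max (X \<omega>) (Y \<omega>)\<bar>) (\<lambda>\<omega>. \<bar>X \<omega>\<bar>) \<and>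
         st_less M (\<lambda>\<omega>. \<bar>Y \<omega>\<bar>) (\<lambda>\<omega>. \<bar>min (X \<omega>) (Y \<omega>)\<bar>)) \<longleftrightarrow>
        measure M {\<omega>\<in>space M. \<bar>X \<omega>\<bar> < Y \<omega>} < measure M {\<omega>\<in>space M. X \<omega> < - \<bar>Y \<omega>\<bar>}))
  \<and> (LR_upper f \<longrightarrow>
       st_le M (\<lambda>\<omega>. \<bar>max (X \<omega>) (Y \<omega>)\<bar>) (\<lambda>\<omega>. \<bar>Y \<omega>\<bar>) \<and>
       st_le M (\<lambda>\<omega>. \<bar>X \<omega>\<bar>) (\<lambda>\<omega>. \<bar>min (X \<omega>) (Y \<omega>)\<bar>) \<and>
       ((st_less M (\<lambda>\<omega>. \<bar>max (X \<omega>) (Y \<omega>)\<bar>) (\<lambda>\<omega>. \<bar>Y \<omega>\<bar>) \<and>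
         st_less M (\<lambda>\<omega>. \<bar>X \<omega>\<bar>) (\<lambda>\<omega>. \<bar>min (X \<omega>) (Y \<omega>)\<bar>)) \<longleftrightarrow>
        measure M {\<omega>\<in>space M. \<bar>Y \<omega>\<bar> < X \<omega>} < measure M {\<omega>\<in>space M. Y \<omega> < - \<bar>X \<omega>\<bar>}))"
proof -
  note dominated = joint_pdf_or_pmf_reflection_dominated[OF assms]
  have borel: "prod.swap \<in> borel_measurable borel"
    "uminus \<in> borel_measurable (borel :: (real \<times> real) measure)"
    by (intro borel_measurable_continuous_onI continuous_intros)+
  note st_order = st_order_abs_max_min_if_reflection_dominated[OF assms(1)]
  have neg_X: "(\<lambda>\<omega>. - X \<omega>) \<in> borel_measurable M"
    using assms(2) by measurable
  have neg_Y: "(\<lambda>\<omega>. - Y \<omega>) \<in> borel_measurable M"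
    using assms(3) by measurable
  have "UR_lower f \<Longrightarrow> reflection_dominated (distr M borel (\<lambda>\<omega>. (X \<omega>, Y \<omega>)))"
    using dominated[of "\<lambda>z. z"] measurable_ident_sets[OF refl] unfolding UR_lower_iff_upper_cone by blast
  note i = st_order[OF assms(2,3) this]
  have "LR_lower f \<Longrightarrow> reflection_dominated (distr M borel (\<lambda>\<omega>. prod.swap (X \<omega>, Y \<omega>)))"
    using dominated[of prod.swap] borel(1) swap_reflect_antidiag unfolding LR_lower_iff_upper_cone by blast
  note ii = st_order[OF assms(3,2) this[simplified]]
  have "UR_upper f \<Longrightarrow> reflection_dominated (distr M borel (\<lambda>\<omega>. reflect_antidiag (X \<omega>, Y \<omega>)))"
    using dominated[of reflect_antidiag] measurable_reflect_antidiag unfolding UR_upper_iff_upper_cone by blast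
  note iii = st_order[OF neg_Y neg_X this[simplified]]
  have "LR_upper f \<Longrightarrow> reflection_dominated (distr M borel (\<lambda>\<omega>. - (X \<omega>, Y \<omega>)))"
    using dominated[of uminus] borel(2) uminus_reflect_antidiag unfolding LR_upper_iff_upper_cone by blast
  note iv = st_order[OF neg_X neg_Y this[simplified]]
  show ?thesis
    using i ii iii iv
    by (simp only: abs_minus_cancel abs_max_uminus abs_min_uminus neg_less_iff_less
        abs_less_uminus_iff max.commute min.commute; blast)
qed

end
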